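(* Let $\lambda$ be an infinite cardinal with $\lambda=\lambda^{<\lambda}$. Then $(\mathfrak{b}^5_\lambda)'\le\mathfrak{b}^1_\lambda$.
   Context: For sets $A,B$, $A\subseteq^* B$ means $|A\setminus B|<\lambda$. For families $\mathcal{B},\mathcal{C}$ of subsets of $\lambda\times\lambda$, a set $S$ separates $\mathcal{B}$ and $\mathcal{C}$ if $B\subseteq^* S$ for every $B\in\mathcal{B}$ and $|C\cap S|<\lambda$ for every $C\in\mathcal{C}$; $\mathcal{B},\mathcal{C}$ are separable if some $S$ separates them. A family is almost disjoint if any two distinct members meet in fewer than $\lambda$ points. $(\mathfrak{b}^5_\lambda)'$ is the least cardinality of a family $\mathcal{B}\subseteq[\lambda\times\lambda]^\lambda$ for which there is $\mathcal{C}\subseteq[\lambda\times\lambda]^\lambda$ with $|\mathcal{C}|=\lambda$, $\mathcal{B}\cap\mathcal{C}=\emptyset$, $\mathcal{B}\cup\mathcal{C}$ almost disjoint, and such that for every $\mathcal{D}\in[\mathcal{C}]^\lambda$, $\mathcal{B}$ and $\mathcal{D}$ are not separable. For $f,g\in{}^\lambda\lambda$, $f<^* g$ means $|\{\alpha<\lambda: f(\alpha)\ge g(\alpha)\}|<\lambda$ and $f\le^*g$ means $|\{\alpha: f(\alpha)>g(\alpha)\}|<\lambda$; $B\subseteq{}^\lambda\lambda$ is unbounded if no $h$ satisfies $f\le^* h$ for all $f\in B$. $\mathfrak{b}^1_\lambda$ is the least cardinality of an unbounded $B\subseteq{}^\lambda\lambda$ all of whose members are strictly increasing and which is well ordered by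 $<^*$. *)

theory Defs
  imports Main "HOL-Library.FuncSet"
begin

text \<open>The cardinal lambda is represented by a type 'k with a well-order
whose order type is the initial ordinal lambda: the type is infinite and every
proper initial segment has cardinality strictly below that of the type.\<close>

definition infinite_cardinal_type :: "'k::wellorder itself \<Rightarrow> bool" where
  "infinite_cardinal_type _ \<longleftrightarrow> infinite (UNIV :: 'k set) \<and>
     (\<forall>x::'k. (card_of {y. y < x}, card_of (UNIV :: 'k set)) \<in> ordLess)"

text \<open>lambda^{<lambda} = lambda: the set of all functions from some alpha < lambda
(an initial segment) to lambda has cardinality lambda.\<close>
definition lambda_lt_lambda :: "'k::wellorder itself \<Rightarrow> bool" where
  "lambda_lt_lambda _ \<longleftrightarrow>
     (card_of (SIGMA a:(UNIV::'k set). ({b. b < a} \<rightarrow>\<^sub>E (UNIV :: 'k set))),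
      card_of (UNIV :: 'k set)) \<in> ordIso"

definition small :: "'a set \<Rightarrow> 'k itself \<Rightarrow> bool" where
  "small A _ \<longleftrightarrow> (card_of A, card_of (UNIV :: 'k set)) \<in> ordLess"

definition size_lambda :: "'a set \<Rightarrow> 'k itself \<Rightarrow> bool" where
  "size_lambda A _ \<longleftrightarrow> (card_of A, card_of (UNIV :: 'k set)) \<in> ordIso"

definition almost_subset :: "('k \<times> 'k) set \<Rightarrow> ('k \<times> 'k) set \<Rightarrow> bool" where
  "almost_subset A B \<longleftrightarrow> small (A - B) TYPE('k)"

definition separates :: "('k \<times> 'k) set \<Rightarrow> ('k \<times> 'k) set set \<Rightarrow> ('k \<times> 'k) set set \<Rightarrow> bool" where
  "separates S \<B> \<C> \<longleftrightarrow> (\<forall>B\<in>\<B>. almost_subset B S) \<and> (\<forall>C\<in>\<C>. small (C \<inter> S) TYPE('k))"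

definition separable :: "('k \<times> 'k) set set \<Rightarrow> ('k \<times> 'k) set set \<Rightarrow> bool" where
  "separable \<B> \<C> \<longleftrightarrow> (\<exists>S. separates S \<B> \<C>)"

definition almost_disjoint :: "('k \<times> 'k) set set \<Rightarrow> bool" where
  "almost_disjoint F \<longleftrightarrow> (\<forall>X\<in>F. \<forall>Y\<in>F. X \<noteq> Y \<longrightarrow> small (X \<inter> Y) TYPE('k))"

definition big_subsets :: "'k itself \<Rightarrow> ('k \<times> 'k) set set" where
  "big_subsets _ = {X. size_lambda X TYPE('k)}"

definition b5'_family :: "('k \<times> 'k) set set \<Rightarrow> bool" where
  "b5'_family \<B> \<longleftrightarrow> \<B> \<subseteq> big_subsets TYPE('k) \<and>
     (\<exists>\<C>. \<C> \<subseteq> big_subsets TYPE('k) \<and> size_lambda \<C> TYPE('k) \<and> \<B> \<inter> \<C> = {} \<and>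
          almost_disjoint (\<B> \<union> \<C>) \<and>
          (\<forall>\<D>. \<D> \<subseteq> \<C> \<and> size_lambda \<D> TYPE('k) \<longrightarrow> \<not> separable \<B> \<D>))"

definition eventually_less :: "('k::wellorder \<Rightarrow> 'k) \<Rightarrow> ('k \<Rightarrow> 'k) \<Rightarrow> bool" where
  "eventually_less f g \<longleftrightarrow> small {a. f a \<ge> g a} TYPE('k)"

definition eventually_le :: "('k::wellorder \<Rightarrow> 'k) \<Rightarrow> ('k \<Rightarrow> 'k) \<Rightarrow> bool" where
  "eventually_le f g \<longleftrightarrow> small {a. f a > g a} TYPE('k)"

definition unbounded :: "('k::wellorder \<Rightarrow> 'k) set \<Rightarrow> bool" where
  "unbounded B \<longleftrightarrow> \<not> (\<exists>h. \<forall>f\<in>B. eventually_le f h)"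

definition wellordered_by_eventually_less :: "('k::wellorder \<Rightarrow> 'k) set \<Rightarrow> bool" where
  "wellordered_by_eventually_less B \<longleftrightarrow>
     (\<forall>f\<in>B. \<not> eventually_less f f) \<and>
     (\<forall>f\<in>B. \<forall>g\<in>B. \<forall>h\<in>B. eventually_less f g \<and> eventually_less g h \<longrightarrow> eventually_less f h) \<and>
     (\<forall>f\<in>B. \<forall>g\<in>B. f \<noteq> g \<longrightarrow> eventually_less f g \<or> eventually_less g f) \<and>
     wf {(f, g). f \<in> B \<and> g \<in> B \<and> eventually_less f g}"

definition b1_family :: "('k::wellorder \<Rightarrow> 'k) set \<Rightarrow> bool" where
  "b1_family B \<longleftrightarrow> (\<forall>f\<in>B. strict_mono f) \<and> wellordered_by_eventually_less B \<and> unbounded B"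

end

theory Submission
  imports Defs
begin

unbundle cardinal_syntax

(*
  Let B be a family witnessing b^1_lambda: strictly increasing functions,
  well ordered by <* and unbounded.  We show that the graphs of the members of B,
  together with the lambda many columns {a} x lambda, witness (b^5_lambda)'.
  Graphs of <*-comparable functions meet in a small set and a graph meets a column in a
  single point, so the whole family is almost disjoint.  If S separated the graphs from
  lambda many columns {a} x lambda with a in A, then each section of S along such a
  column would be small, hence bounded by some hb(a); since A is unbounded and the
  functions increase, h(x) = hb(least a in A above x) would bound all of B, a
  contradiction.  The step "small sets are bounded" (regularity of lambda) is derived
  from lambda^{<lambda} = lambda by a diagonal argument.
*)

text \<open>The order of a wellorder type as a relation, so that the cardinal library applies.\<close>
definition le_rel :: "'k::wellorder rel" where
  "le_rel = {(x, y). x \<le> y}"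

lemma Field_le_rel: "Field (le_rel :: 'k::wellorder rel) = UNIV"
  unfolding le_rel_def Field_def by auto

lemma Well_order_le_rel: "Well_order (le_rel :: 'k::wellorder rel)"
proof -
  have "(le_rel :: 'k rel) - Id = {(x, y). x < y}"
    unfolding le_rel_def by auto
  then have "wf ((le_rel :: 'k rel) - Id)"
    using wellorder_class.wf by simp
  moreover have "linear_order (le_rel :: 'k rel)"
    unfolding linear_order_on_def partial_order_on_def preorder_on_def Field_le_rel
    unfolding refl_on_def trans_def antisym_def total_on_def le_rel_def by auto
  ultimately show ?thesis
    unfolding well_order_on_def Field_le_rel by simp
qed

lemma underS_le_rel: "underS le_rel a = {y. y < (a::'k::wellorder)}"
  unfolding underS_def le_rel_def by auto

lemma small_card_embeds_in_segment:
  assumes "|Y| <o |UNIV::'k::wellorder set|"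
  shows "\<exists>a::'k. |Y| \<le>o |{y. y < a}|"
proof -
  have "|UNIV::'k set| \<le>o (le_rel :: 'k rel)"
    using card_of_least Well_order_le_rel Field_le_rel by metis
  then have "|Y| <o (le_rel :: 'k rel)"
    using assms ordLess_ordLeq_trans by blast
  then obtain a :: 'k where "|Y| =o Restr le_rel (underS le_rel a)"
    using ordLess_iff_ordIso_Restr[OF Well_order_le_rel card_of_Well_order] by blast
  then have "|Field |Y|| \<le>o |Field (Restr le_rel (underS le_rel a))|"
    using card_of_mono2 ordIso_iff_ordLeq by blast
  moreover have "Field (Restr le_rel (underS le_rel a)) \<subseteq> {y. y < a}"
    using underS_le_rel by (metis Field_Restr_subset)
  ultimately show ?thesis
    using card_of_mono1 ordLeq_transitive by (metis Field_card_of)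
qed

lemma small_mono: "A \<subseteq> B \<Longrightarrow> small B T \<Longrightarrow> small A T"
  unfolding small_def using card_of_mono1 ordLeq_ordLess_trans by blast

lemma small_image: "small A T \<Longrightarrow> small (f ` A) T"
  unfolding small_def using card_of_image ordLeq_ordLess_trans by blast

lemma not_small_UNIV: "\<not> small (UNIV::'k set) TYPE('k)"
  unfolding small_def using ordLess_irreflexive by blast

lemma size_lambda_not_small: "size_lambda A T \<Longrightarrow> \<not> small A T"
  unfolding small_def size_lambda_def using not_ordLess_ordIso by blast

lemma size_lambda_bij: "bij_betw f (UNIV::'k set) A \<Longrightarrow> size_lambda A TYPE('k)"
  unfolding size_lambda_def using card_of_ordIsoI ordIso_symmetric by blast

context
  assumes card: "infinite_cardinal_type TYPE('k::wellorder)"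
begin

lemma infinite_UNIV_card: "infinite (UNIV::'k set)"
  using card unfolding infinite_cardinal_type_def by blast

lemma small_initial_segment: "small {y. y < (x::'k)} TYPE('k)"
  using card unfolding small_def infinite_cardinal_type_def by blast

lemma small_Un: "small A TYPE('k) \<Longrightarrow> small B TYPE('k) \<Longrightarrow> small (A \<union> B) TYPE('k)"
  using card unfolding small_def infinite_cardinal_type_def
  using card_of_Un_ordLess_infinite by blast

lemma small_finite: "finite A \<Longrightarrow> small A TYPE('k)"
  unfolding small_def
  using finite_ordLess_infinite[OF card_of_Well_order card_of_Well_order, of A "UNIV::'k set"]
    infinite_UNIV_card unfolding Field_card_of by blast

lemma bounded_small:
  assumes "\<forall>x\<in>X. x \<le> (b::'k)"
  shows "small X TYPE('k)"
proof -
  have "X \<subseteq> {y. y < b} \<union> {b}"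
    using assms by (auto simp: order.order_iff_strict)
  moreover have "small ({y. y < b} \<union> {b}) TYPE('k)"
    using small_Un[OF small_initial_segment small_finite[of "{b}"]] by simp
  ultimately show ?thesis
    using small_mono by blast
qed

lemma not_small_cofinal:
  assumes "\<not> small (A::'k set) TYPE('k)"
  shows "\<exists>a. a \<in> A \<and> x \<le> a"
  using bounded_small[of A x] assms by (meson less_imp_le not_le)

subsection \<open>Regularity of lambda from lambda^{<lambda} = lambda\<close>

context
  assumes lambda_lt: "lambda_lt_lambda TYPE('k)"
begin

lemma small_exp_ordLeq:
  fixes X :: "'k set"
  assumes "small X TYPE('k)"
  shows "|X \<rightarrow>\<^sub>E (UNIV::'k set)| \<le>o |UNIV::'k set|"
proof -
  obtain a :: 'k where "|X| \<le>o |{y. y < a}|"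
    using small_card_embeds_in_segment assms unfolding small_def by blast
  then obtain j where j: "inj_on j X" "j ` X \<subseteq> {y. y < a}"
    using card_of_ordLeq[of X "{y. y < a}"] by blast
  let ?Sig = "SIGMA a:(UNIV::'k set). ({b. b < a} \<rightarrow>\<^sub>E (UNIV :: 'k set))"
  text \<open>Transport a function along j and pad it, to get an element of the segment-indexed sum.\<close>
  define \<Phi> where "\<Phi> \<phi> = (a, \<lambda>y. if y \<in> j ` X then \<phi> (inv_into X j y)
      else if y < a then a else undefined)" for \<phi> :: "'k \<Rightarrow> 'k"
  have "inj_on \<Phi> (X \<rightarrow>\<^sub>E UNIV)"
  proof (rule inj_onI)
    fix \<phi> \<psi> assume h: "\<phi> \<in> X \<rightarrow>\<^sub>E UNIV" "\<psi> \<in> X \<rightarrow>\<^sub>E UNIV" "\<Phi> \<phi> = \<Phi> \<psi>"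
    show "\<phi> = \<psi>"
    proof
      fix x
      show "\<phi> x = \<psi> x"
      proof (cases "x \<in> X")
        case True
        have "snd (\<Phi> \<phi>) (j x) = snd (\<Phi> \<psi>) (j x)"
          using h(3) by simp
        then show ?thesis
          using True j(1) unfolding \<Phi>_def by simp
      next
        case False
        then show ?thesis
          using h(1,2) by (simp add: PiE_def extensional_def)
      qed
    qed
  qed
  moreover have "\<Phi> ` (X \<rightarrow>\<^sub>E UNIV) \<subseteq> ?Sig"
  proof -
    have "\<forall>x\<in>X. j x < a"
      using j(2) by blast
    then show ?thesis
      unfolding \<Phi>_def by (auto simp: PiE_def extensional_def)
  qed
  ultimately have "|X \<rightarrow>\<^sub>E (UNIV::'k set)| \<le>o |?Sig|"
    using card_of_ordLeq by blast
  moreover have "|?Sig| =o |UNIV::'k set|"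
    using lambda_lt unfolding lambda_lt_lambda_def by simp
  ultimately show ?thesis
    using ordLeq_ordIso_trans by blast
qed

text \<open>Small sets are bounded: otherwise, enumerating all functions X -> lambda by lambda,
  a function that at each x in X avoids the values at x of the first x functions
  could not occur in the enumeration.\<close>
lemma small_bounded:
  fixes X :: "'k set"
  assumes "small X TYPE('k)"
  shows "\<exists>b::'k. \<forall>x\<in>X. x \<le> b"
proof (rule ccontr)
  assume "\<not> ?thesis"
  then have unbounded_X: "\<forall>b. \<exists>x\<in>X. b < x"
    by (meson not_le)
  obtain F :: "('k \<Rightarrow> 'k) \<Rightarrow> 'k" where F: "inj_on F (X \<rightarrow>\<^sub>E UNIV)"
    using small_exp_ordLeq[OF assms] card_of_ordLeq[of "X \<rightarrow>\<^sub>E (UNIV::'k set)" "UNIV::'k set"]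
    by blast
  define g where "g i = inv_into (X \<rightarrow>\<^sub>E UNIV) F i" for i
  have avoid: "\<exists>v. v \<notin> (\<lambda>i. g i x) ` {i. i < x}" for x
  proof (rule ccontr)
    assume "\<not> ?thesis"
    then have "(\<lambda>i. g i x) ` {i. i < x} = UNIV"
      by auto
    then show False
      using small_image[OF small_initial_segment] not_small_UNIV by metis
  qed
  define d where "d x = (if x \<in> X then (SOME v. v \<notin> (\<lambda>i. g i x) ` {i. i < x})
      else undefined)" for x
  have "d \<in> X \<rightarrow>\<^sub>E UNIV"
    unfolding d_def by auto
  then have gd: "g (F d) = d"
    unfolding g_def using F by simp
  obtain x where x: "x \<in> X" "F d < x"
    using unbounded_X by blast
  have "d x \<notin> (\<lambda>i. g i x) ` {i. i < x}"
    unfolding d_def using x(1) someI_ex[OF avoid] by simp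
  moreover have "d x \<in> (\<lambda>i. g i x) ` {i. i < x}"
    using x(2) gd by (metis (mono_tags, lifting) image_eqI mem_Collect_eq)
  ultimately show False
    by blast
qed

end

end

subsection \<open>Graphs and columns\<close>

definition graph :: "('k \<Rightarrow> 'k) \<Rightarrow> ('k \<times> 'k) set" where
  "graph f = range (\<lambda>a. (a, f a))"

definition column :: "'k \<Rightarrow> ('k \<times> 'k) set" where
  "column a = {a} \<times> UNIV"

lemma inj_column: "inj column"
  unfolding column_def inj_def by auto

lemma size_lambda_graph: "size_lambda (graph f) TYPE('k)"
  for f :: "'k \<Rightarrow> 'k"
  by (rule size_lambda_bij[of "\<lambda>a. (a, f a)"]) (auto simp: graph_def bij_betw_def inj_def)

lemma size_lambda_column: "size_lambda (column a) TYPE('k)"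
  for a :: 'k
  by (rule size_lambda_bij[of "Pair a"]) (auto simp: column_def bij_betw_def inj_def)

lemma size_lambda_columns: "size_lambda (range (column :: 'k \<Rightarrow> ('k \<times> 'k) set)) TYPE('k)"
  by (rule size_lambda_bij[of column]) (simp add: bij_betw_def inj_column)

text \<open>If f <* g then the graphs of f and g can only meet where f >= g, a small set.\<close>
lemma small_graph_Int_graph:
  fixes f g :: "'k::wellorder \<Rightarrow> 'k"
  assumes "eventually_less f g"
  shows "small (graph f \<inter> graph g) TYPE('k)"
proof -
  have "graph f \<inter> graph g \<subseteq> (\<lambda>a. (a, f a)) ` {a. f a \<ge> g a}"
    unfolding graph_def by auto
  moreover have "small ((\<lambda>a. (a, f a)) ` {a. f a \<ge> g a}) TYPE('k)"
    using assms small_image unfolding eventually_less_def by blast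
  ultimately show ?thesis
    by (rule small_mono)
qed

lemma graph_Int_column: "graph f \<inter> column a = {(a, f a)}"
  unfolding graph_def column_def by auto

context
  assumes card: "infinite_cardinal_type TYPE('k::wellorder)"
begin

text \<open>Since lambda has more than one element, no graph is a column.\<close>
lemma graph_neq_column: "graph f \<noteq> (column a :: ('k \<times> 'k) set)"
proof
  assume eq: "graph f = column a"
  have "(UNIV :: 'k set) \<noteq> {f a}"
    using infinite_UNIV_card[OF card] by (metis finite.emptyI finite.insertI)
  then obtain b :: 'k where "b \<noteq> f a"
    by blast
  then have "(a, b) \<in> column a - graph f"
    unfolding graph_def column_def by auto
  with eq show False
    by simp
qed

lemma almost_disjoint_graphs_columns:
  fixes F :: "('k \<Rightarrow> 'k) set"
  assumes comparable: "\<And>f g. f \<in> F \<Longrightarrow> g \<in> F \<Longrightarrow> f \<noteq> g \<Longrightarrow>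
      eventually_less f g \<or> eventually_less g f"
  shows "almost_disjoint (graph ` F \<union> range column)"
  unfolding almost_disjoint_def
proof (intro ballI impI)
  fix X Y assume X: "X \<in> graph ` F \<union> range column" and Y: "Y \<in> graph ` F \<union> range column"
    and "X \<noteq> Y"
  have graph_column: "small (graph f \<inter> column a) TYPE('k)" for f :: "'k \<Rightarrow> 'k" and a
    unfolding graph_Int_column by (rule small_finite[OF card]) simp
  from X Y consider
      (graphs) f g where "f \<in> F" "g \<in> F" "X = graph f" "Y = graph g"
    | (graph_col) f a where "X = graph f" "Y = column a"
    | (col_graph) f a where "X = column a" "Y = graph f"
    | (cols) a b where "X = column a" "Y = column b"
    by blast
  then show "small (X \<inter> Y) TYPE('k)"
  proof cases
    case graphs
    with \<open>X \<noteq> Y\<close> have "f \<noteq> g"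
      by blast
    with graphs comparable consider "eventually_less f g" | "eventually_less g f"
      by blast
    then show ?thesis
      using graphs small_graph_Int_graph[of f g] small_graph_Int_graph[of g f]
      by cases (simp_all add: Int_commute)
  next
    case graph_col
    with graph_column show ?thesis
      by simp
  next
    case col_graph
    with graph_column show ?thesis
      by (simp add: Int_commute)
  next
    case cols
    with \<open>X \<noteq> Y\<close> have "X \<inter> Y = {}"
      unfolding column_def by auto
    then show ?thesis
      by (simp add: small_finite[OF card])
  qed
qed

subsection \<open>Separating graphs from columns bounds the functions\<close>

context
  assumes lambda_lt: "lambda_lt_lambda TYPE('k)"
begin

lemma column_section_bounded:
  fixes S :: "('k \<times> 'k) set"
  assumes "small (column a \<inter> S) TYPE('k)"
  shows "\<exists>c. \<forall>b. (a, b) \<in> S \<longrightarrow> b \<le> c"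
proof -
  have "{b. (a, b) \<in> S} \<subseteq> snd ` (column a \<inter> S)"
    unfolding column_def by force
  then have "small {b. (a, b) \<in> S} TYPE('k)"
    using assms small_mono small_image by metis
  then show ?thesis
    using small_bounded[OF card lambda_lt] by blast
qed

lemma graph_almost_subset_eventually:
  fixes f :: "'k \<Rightarrow> 'k"
  assumes "almost_subset (graph f) S"
  shows "\<exists>e. \<forall>a. e < a \<longrightarrow> (a, f a) \<in> S"
proof -
  have "{a. (a, f a) \<notin> S} \<subseteq> fst ` (graph f - S)"
    unfolding graph_def by force
  moreover have "small (fst ` (graph f - S)) TYPE('k)"
    using assms small_image unfolding almost_subset_def by blast
  ultimately have "small {a. (a, f a) \<notin> S} TYPE('k)"
    by (rule small_mono)
  then obtain e where "\<forall>a. (a, f a) \<notin> S \<longrightarrow> a \<le> e"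
    using small_bounded[OF card lambda_lt] by blast
  then have "\<forall>a. e < a \<longrightarrow> (a, f a) \<in> S"
    by (auto dest: leD)
  then show ?thesis
    by blast
qed

text \<open>Bound the section of S over
  each column a in A by hb(a) and set h(x) = hb(next point of A above x).\<close>
lemma separated_graphs_bounded:
  fixes F :: "('k \<Rightarrow> 'k) set" and A :: "'k set"
  assumes incr: "\<And>f. f \<in> F \<Longrightarrow> strict_mono f"
    and large: "\<not> small A TYPE('k)"
    and sep: "separates S (graph ` F) (column ` A)"
  shows "\<exists>h. \<forall>f\<in>F. eventually_le f h"
proof -
  have sections: "\<forall>a\<in>A. \<exists>c. \<forall>b. (a, b) \<in> S \<longrightarrow> b \<le> c"
    using column_section_bounded sep unfolding separates_def by blast
  obtain hb where hb: "\<forall>a\<in>A. \<forall>b. (a, b) \<in> S \<longrightarrow> b \<le> hb a"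
    using bchoice[OF sections] by blast
  define nxt where "nxt x = (LEAST a. a \<in> A \<and> x \<le> a)" for x
  have nxt: "nxt x \<in> A \<and> x \<le> nxt x" for x
    unfolding nxt_def by (rule LeastI_ex[OF not_small_cofinal[OF card large]])
  define h where "h x = hb (nxt x)" for x
  have "eventually_le f h" if f: "f \<in> F" for f
  proof -
    have "almost_subset (graph f) S"
      using sep f unfolding separates_def by blast
    then obtain e where e: "\<forall>a. e < a \<longrightarrow> (a, f a) \<in> S"
      using graph_almost_subset_eventually by blast
    have bound: "f x \<le> h x" if "e < x" for x
    proof -
      have x_nxt: "x \<le> nxt x" and A_nxt: "nxt x \<in> A"
        using nxt by auto
      have "f x \<le> f (nxt x)"
        using x_nxt strict_mono_less_eq[OF incr[OF f]] by blast
      moreover have "(nxt x, f (nxt x)) \<in> S"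
        using e \<open>e < x\<close> x_nxt by (meson order_less_le_trans)
      then have "f (nxt x) \<le> h x"
        unfolding h_def using hb A_nxt by blast
      ultimately show ?thesis
        by (rule order_trans)
    qed
    have "\<forall>x\<in>{a. f a > h a}. x \<le> e"
      using bound by (auto simp: not_le[symmetric])
    then show ?thesis
      unfolding eventually_le_def by (rule bounded_small[OF card])
  qed
  then show ?thesis
    by blast
qed

lemma b5'_family_graphs:
  fixes B :: "('k \<Rightarrow> 'k) set"
  assumes "b1_family B"
  shows "b5'_family (graph ` B)"
  unfolding b5'_family_def
proof (intro conjI exI[of _ "range (column :: 'k \<Rightarrow> ('k \<times> 'k) set)"])
  have incr: "\<And>f. f \<in> B \<Longrightarrow> strict_mono f" and wo: "wellordered_by_eventually_less B"
    and unb: "unbounded B"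
    using assms unfolding b1_family_def by auto
  show "graph ` B \<subseteq> big_subsets TYPE('k)"
    unfolding big_subsets_def using size_lambda_graph by blast
  show "range column \<subseteq> big_subsets TYPE('k)"
    unfolding big_subsets_def by (auto simp: size_lambda_column)
  show "size_lambda (range (column :: 'k \<Rightarrow> ('k \<times> 'k) set)) TYPE('k)"
    by (rule size_lambda_columns)
  show "graph ` B \<inter> range column = {}"
    using graph_neq_column by auto
  show "almost_disjoint (graph ` B \<union> range column)"
    using wo almost_disjoint_graphs_columns unfolding wellordered_by_eventually_less_def by metis
  show "\<forall>D. D \<subseteq> range column \<and> size_lambda D TYPE('k) \<longrightarrow> \<not> separable (graph ` B) D"
  proof (intro allI impI notI)
    fix D assume D: "D \<subseteq> range column \<and> size_lambda D TYPE('k)" and "separable (graph ` B) D"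
    then obtain S where S: "separates S (graph ` B) D"
      unfolding separable_def by blast
    define A where "A = {a. column a \<in> D}"
    have D_eq: "D = column ` A"
      using D unfolding A_def by auto
    have "bij_betw column A D"
      unfolding D_eq using inj_column by (blast intro: bij_betw_imageI inj_on_subset)
    then have "|A| =o |D|"
      by (rule card_of_ordIsoI)
    then have "size_lambda A TYPE('k)"
      using D ordIso_transitive unfolding size_lambda_def by blast
    then have "\<not> small A TYPE('k)"
      by (rule size_lambda_not_small)
    then show False
      using separated_graphs_bounded[OF incr _ S[unfolded D_eq]] unb
      unfolding unbounded_def by blast
  qed
qed

end

end

theorem mainTheorem9:
  fixes B :: "('k::wellorder \<Rightarrow> 'k) set"
  assumes "infinite_cardinal_type TYPE('k)"
    and "lambda_lt_lambda TYPE('k)"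
    and "b1_family B"
  shows "\<exists>\<B> :: ('k \<times> 'k) set set. b5'_family \<B> \<and> (card_of \<B>, card_of B) \<in> ordLeq"
proof -
  have "b5'_family (graph ` B)"
    using b5'_family_graphs assms by blast
  moreover have "|graph ` B| \<le>o |B|"
    by (rule card_of_image)
  ultimately show ?thesis
    by blast
qed

end
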